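(* Let $m\ge0$. Let $B_m(\mathbb C)$ (resp. $B_m(\mathbb R)$) act on the space $\mathrm{Her}_m(\mathbb C)$ of $m\times m$ Hermitian matrices (resp. the space $\mathrm{Sym}_m(\mathbb R)$ of real symmetric matrices) by $b\cdot z=bzb^*$ (resp. $b\cdot z=bzb^t$). Then the maps $\tau\mapsto B_m(\mathbb C)\cdot\tau$ and $\tau\mapsto B_m(\mathbb R)\cdot\tau$ are bijections $$\mathrm{SPI}^+_m\xrightarrow{\sim}B_m(\mathbb C)\backslash\mathrm{Her}_m(\mathbb C),\qquad \mathrm{SPI}^+_m\xrightarrow{\sim}B_m(\mathbb R)\backslash\mathrm{Sym}_m(\mathbb R);$$ i.e. $\mathrm{SPI}^+_m$ is a complete system of representatives for both orbit spaces.
   Context: $B_m(\mathbb C)$, $B_m(\mathbb R)$ denote the groups of invertible upper triangular complex, resp. real, $m\times m$ matrices. A signed partial permutation is an $m\times m$ integer matrix with entries in $\{-1,0,1\}$ and at most one nonzero entry in each row and in each column. $\mathrm{SPI}_m$ (signed partial involutions) is the set of symmetric signed partial permutations, and $\mathrm{SPI}^+_m\subset\mathrm{SPI}_m$ is the subset of those whose off-diagonal entries are all nonnegative. *)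

theory Defs
  imports "Jordan_Normal_Form.Matrix" "Jordan_Normal_Form.Schur_Decomposition"
begin

definition borel_mats :: "nat \<Rightarrow> 'a::semiring_1 mat set" where
  "borel_mats m = {b \<in> carrier_mat m m. upper_triangular b \<and> invertible_mat b}"

definition herm_mats :: "nat \<Rightarrow> complex mat set" where
  "herm_mats m = {z \<in> carrier_mat m m. mat_adjoint z = z}"

definition sym_mats :: "nat \<Rightarrow> real mat set" where
  "sym_mats m = {z \<in> carrier_mat m m. transpose_mat z = z}"

definition signed_partial_perm :: "nat \<Rightarrow> int mat \<Rightarrow> bool" where
  "signed_partial_perm m w \<longleftrightarrow> w \<in> carrier_mat m m \<and>
     (\<forall>i<m. \<forall>j<m. w $$ (i,j) \<in> {-1, 0, 1}) \<and>
     (\<forall>i<m. \<forall>j<m. \<forall>k<m. w $$ (i,j) \<noteq> 0 \<and> w $$ (i,k) \<noteq> 0 \<longrightarrow> j = k) \<and>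
     (\<forall>i<m. \<forall>j<m. \<forall>k<m. w $$ (i,j) \<noteq> 0 \<and> w $$ (k,j) \<noteq> 0 \<longrightarrow> i = k)"

definition SPI :: "nat \<Rightarrow> int mat set" where
  "SPI m = {w. signed_partial_perm m w \<and> transpose_mat w = w}"

definition SPI_plus :: "nat \<Rightarrow> int mat set" where
  "SPI_plus m = {w \<in> SPI m. \<forall>i<m. \<forall>j<m. i \<noteq> j \<longrightarrow> w $$ (i,j) \<ge> 0}"

definition herm_orbit :: "nat \<Rightarrow> complex mat \<Rightarrow> complex mat set" where
  "herm_orbit m z = {b * z * mat_adjoint b | b. b \<in> borel_mats m}"

definition sym_orbit :: "nat \<Rightarrow> real mat \<Rightarrow> real mat set" where
  "sym_orbit m z = {b * z * transpose_mat b | b. b \<in> borel_mats m}"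

definition herm_orbit_space :: "nat \<Rightarrow> complex mat set set" where
  "herm_orbit_space m = herm_orbit m ` herm_mats m"

definition sym_orbit_space :: "nat \<Rightarrow> real mat set set" where
  "sym_orbit_space m = sym_orbit m ` sym_mats m"

end

theory Submission
  imports Defs
begin

text \<open>
  Existence: a Hermitian matrix is brought into \<open>SPI\<^sup>+\<close> form by Borel congruences
  \<open>z \<mapsto> b z b\<^sup>*\<close>, one row at a time from the bottom. Suppose the block of entries with
  indices \<open>> i\<close> already has \<open>SPI\<^sup>+\<close> shape. Adding multiples of its pivot rows to row \<open>i\<close>
  clears the entries of row \<open>i\<close> above the pivots. If row \<open>i\<close> then vanishes off the diagonal,
  rescaling \<open>e\<^sub>i\<close> normalises the diagonal entry to \<open>0\<close> or \<open>\<plusminus>1\<close>. Otherwise let \<open>k\<close> be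
  the last nonzero position of row \<open>i\<close>: row \<open>k\<close> vanishes on the block, and adding multiples of
  it to the rows \<open>i, \<dots>, k\<close> turns column \<open>i\<close> into \<open>e\<^sub>k\<close> and kills the diagonal entry.

  Uniqueness: if \<open>w = b z b\<^sup>*\<close> for normal forms \<open>z\<close>, \<open>w\<close> and \<open>c = b\<^sup>-\<^sup>1\<close>, then
  \<open>w c\<^sup>* = b z\<close>. As \<open>b\<close> and \<open>c\<close> are upper triangular, an off-diagonal pivot \<open>(i,k)\<close> of
  \<open>z\<close> forces a nonzero entry \<open>(i,q)\<close> of \<open>w\<close> with \<open>q \<ge> k\<close>; by symmetry the pivots coincide.
  An isolated diagonal entry gets multiplied by \<open>b\<^sub>i\<^sub>i conj b\<^sub>i\<^sub>i\<close>, which cannot change a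
  value in \<open>{-1,0,1}\<close> since \<open>p conj p\<close> is never \<open>-1\<close>.

  The argument works over any field with conjugation in which every nonzero self-conjugate
  element can be scaled to \<open>\<plusminus>1\<close> by some \<open>a \<mapsto> p a conj p\<close> and no \<open>p conj p\<close> equals \<open>-1\<close>;
  the theorem is the case of \<open>\<real>\<close> and \<open>\<complex>\<close>.
\<close>

lemma conjugate_one [simp]: "conjugate (1::'a::conjugatable_field) = 1"
  by (metis conjugate_dist_mul conjugate_id mult_1 mult.right_neutral)

lemma conjugate_diff: "conjugate (a - b) = conjugate a - conjugate (b::'a::conjugatable_ring)"
  by (metis diff_conv_add_uminus conjugate_dist_add conjugate_neg)

lemma conjugate_of_int [simp]: "conjugate (of_int k :: 'a::conjugatable_field) = of_int k"
  by (induct k rule: int_induct[of _ 0])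
    (simp_all add: conjugate_dist_add conjugate_diff del: add_uminus_conv_diff)

lemma conjugate_inverse: "conjugate (inverse x) = inverse (conjugate (x::'a::conjugatable_field))"
proof (cases "x = 0")
  case False
  then have "conjugate x * conjugate (inverse x) = 1"
    by (metis conjugate_dist_mul conjugate_one right_inverse)
  then show ?thesis by (simp add: inverse_unique)
qed simp

lemma conjugate_of_bool [simp]: "conjugate (of_bool b :: 'a::conjugatable_field) = of_bool b"
  by (cases b) simp_all

lemma conjugate_sign: "x \<in> {-1,0,1} \<Longrightarrow> conjugate x = (x::'a::conjugatable_field)"
  by (auto simp: conjugate_neg)

lemma conjugate_half: "conjugate (a / 2) = conjugate a / (2::'a::conjugatable_field)"
proof -
  have "conjugate (2::'a) = 2" by (metis one_add_one conjugate_dist_add conjugate_one)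
  then show ?thesis by (metis divide_inverse conjugate_dist_mul conjugate_inverse)
qed

lemma mat_adjoint_dim [simp]:
  "dim_row (mat_adjoint A) = dim_col A" "dim_col (mat_adjoint A) = dim_row A"
  unfolding mat_adjoint_def by auto

lemma mat_adjoint_carrier [simp]: "A \<in> carrier_mat m n \<Longrightarrow> mat_adjoint A \<in> carrier_mat n m"
  by (metis carrier_matD carrier_matI mat_adjoint_dim)

lemma mat_adjoint_index [simp]:
  "i < dim_col A \<Longrightarrow> j < dim_row A \<Longrightarrow> mat_adjoint A $$ (i,j) = conjugate (A $$ (j,i))"
  unfolding mat_adjoint_def by (subst mat_of_rows_index) auto

lemma mat_adjoint_adjoint [simp]: "mat_adjoint (mat_adjoint A) = A"
  by (rule eq_matI) auto

lemma mat_adjoint_one [simp]: "mat_adjoint (1\<^sub>m n) = 1\<^sub>m n"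
  by (rule eq_matI) auto

lemma mat_adjoint_real: "mat_adjoint (A::real mat) = transpose_mat A"
  by (rule eq_matI) auto

lemma sum_eq_single:
  "finite A \<Longrightarrow> a \<in> A \<Longrightarrow> (\<And>x. x \<in> A \<Longrightarrow> x \<noteq> a \<Longrightarrow> f x = 0) \<Longrightarrow> sum f A = f a"
  by (subst sum.mono_neutral_right[of A "{a}"]) auto

lemma index_mult_mat_sum:
  assumes "A \<in> carrier_mat m n" "B \<in> carrier_mat n p" "i < m" "j < p"
  shows "(A * B) $$ (i,j) = (\<Sum>k<n. A $$ (i,k) * B $$ (k,j))"
  using assms by (simp add: scalar_prod_def lessThan_atLeast0)

lemma mat_adjoint_mult:
  assumes A: "A \<in> carrier_mat m n" and B: "B \<in> carrier_mat n p"
  shows "mat_adjoint (A * B) = mat_adjoint B * mat_adjoint A"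
proof (rule eq_matI)
  fix i j assume "i < dim_row (mat_adjoint B * mat_adjoint A)" "j < dim_col (mat_adjoint B * mat_adjoint A)"
  then have ij: "i < p" "j < m" using A B by auto
  have "mat_adjoint (A * B) $$ (i,j) = conjugate ((A * B) $$ (j,i))"
    using A B ij by simp
  also have "\<dots> = conjugate (\<Sum>k<n. A $$ (j,k) * B $$ (k,i))"
    unfolding index_mult_mat_sum[OF A B ij(2,1)] ..
  also have "\<dots> = (\<Sum>k<n. conjugate (B $$ (k,i)) * conjugate (A $$ (j,k)))"
    unfolding sum_conjugate[OF finite_lessThan] conjugate_dist_mul by (simp add: mult.commute)
  also have "\<dots> = (\<Sum>k<n. mat_adjoint B $$ (i,k) * mat_adjoint A $$ (k,j))"
    using A B ij by (intro sum.cong) auto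
  also have "\<dots> = (mat_adjoint B * mat_adjoint A) $$ (i,j)"
    using A B ij by (simp only: index_mult_mat_sum[of _ p n _ m] mat_adjoint_carrier)
  finally show "mat_adjoint (A * B) $$ (i,j) = (mat_adjoint B * mat_adjoint A) $$ (i,j)" .
qed (use A B in auto)

section \<open>The Borel subgroup and its congruence orbits\<close>

lemma invertible_mat_iff_det:
  assumes A: "A \<in> carrier_mat n n"
  shows "invertible_mat A \<longleftrightarrow> det A \<noteq> (0::'a::field)"
proof
  assume "invertible_mat A"
  then obtain B where AB: "A * B = 1\<^sub>m n" and BA: "B * A = 1\<^sub>m (dim_row B)"
    using A unfolding invertible_mat_def inverts_mat_def by auto
  have "dim_col B = n" "dim_row B = n"
    using arg_cong[OF AB, of dim_col] arg_cong[OF BA, of dim_col] A by auto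
  then have "B \<in> carrier_mat n n" by blast
  then have "det A * det B = 1"
    using det_mult[OF A] AB by (metis det_one)
  then show "det A \<noteq> 0" by auto
next
  assume "det A \<noteq> 0"
  then obtain B where "B \<in> carrier_mat n n" "B * A = 1\<^sub>m n" "A * B = 1\<^sub>m n"
    using det_non_zero_imp_unit[OF A, of undefined] unfolding Units_def ring_mat_simps by auto
  then show "invertible_mat A"
    using A unfolding invertible_mat_def inverts_mat_def by auto
qed

lemma upper_triangular_det_nonzero_iff:
  assumes "upper_triangular A" "A \<in> carrier_mat n n"
  shows "det A \<noteq> (0::'a::field) \<longleftrightarrow> (\<forall>i<n. A $$ (i,i) \<noteq> 0)"
  using assms det_upper_triangular[OF assms] by (auto simp: diag_mat_def prod_list_zero_iff)

lemma borel_mats_det: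
  "borel_mats n = {b \<in> carrier_mat n n. upper_triangular b \<and> det b \<noteq> (0::'a::field)}"
  unfolding borel_mats_def using invertible_mat_iff_det by blast

lemma borel_mats_iff_diag:
  "b \<in> borel_mats n \<longleftrightarrow>
     b \<in> carrier_mat n n \<and> upper_triangular b \<and> (\<forall>i<n. b $$ (i,i) \<noteq> (0::'a::field))"
  unfolding borel_mats_det using upper_triangular_det_nonzero_iff by blast

lemma borel_mats_carrier: "b \<in> borel_mats n \<Longrightarrow> b \<in> carrier_mat n n"
  unfolding borel_mats_def by blast

lemma borel_mats_lower_zero: "b \<in> borel_mats n \<Longrightarrow> i < n \<Longrightarrow> j < i \<Longrightarrow> b $$ (i,j) = 0"
  unfolding borel_mats_def upper_triangular_def by auto

lemma borel_mats_diag_nonzero: "b \<in> borel_mats n \<Longrightarrow> i < n \<Longrightarrow> b $$ (i,i) \<noteq> (0::'a::field)"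
  unfolding borel_mats_iff_diag by blast

lemma one_borel_mats: "(1\<^sub>m n :: 'a::field mat) \<in> borel_mats n"
  unfolding borel_mats_det by simp

lemma upper_triangular_mult:
  assumes A: "A \<in> carrier_mat n n" "upper_triangular A" and B: "B \<in> carrier_mat n n" "upper_triangular B"
  shows "upper_triangular (A * B)"
proof
  fix i j assume "j < i" "i < dim_row (A * B)"
  then have ij: "j < i" "i < n" "j < n" using A by auto
  have "A $$ (i,k) * B $$ (k,j) = 0" if "k < n" for k
    using A B ij that upper_triangularD[of A k i] upper_triangularD[of B j k] by (cases "k < i") auto
  then show "(A * B) $$ (i,j) = 0"
    unfolding index_mult_mat_sum[OF A(1) B(1) ij(2,3)] by simp
qed

lemma borel_mats_mult:
  "a \<in> borel_mats n \<Longrightarrow> b \<in> borel_mats n \<Longrightarrow> a * b \<in> borel_mats n" for a b :: "'a::field mat"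
  unfolding borel_mats_det by (auto simp: det_mult upper_triangular_mult)

lemma borel_mats_inverse:
  fixes b :: "'a::field mat"
  assumes b: "b \<in> borel_mats n"
  obtains c where "c \<in> borel_mats n" "c * b = 1\<^sub>m n" "b * c = 1\<^sub>m n"
proof -
  have bc: "b \<in> carrier_mat n n" using b by (rule borel_mats_carrier)
  obtain c where c: "c \<in> carrier_mat n n" "c * b = 1\<^sub>m n" "b * c = 1\<^sub>m n"
    using b det_non_zero_imp_unit[OF bc, of undefined]
    unfolding borel_mats_det Units_def ring_mat_simps by auto
  have "c $$ (i,j) = 0" if "j < i" "i < n" for i j
    using that
  proof (induction j arbitrary: i rule: less_induct)
    case (less j)
    have off_terms: "c $$ (i,k) * b $$ (k,j) = 0" if "k \<in> {..<n}" "k \<noteq> j" for k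
    proof (cases "k < j")
      case True
      then show ?thesis using less.IH[of k i] less.prems by simp
    next
      case False
      then show ?thesis using borel_mats_lower_zero[OF b, of k j] that by simp
    qed
    have "j < n" using less.prems by simp
    have "(c * b) $$ (i,j) = c $$ (i,j) * b $$ (j,j)"
      unfolding index_mult_mat_sum[OF c(1) bc less.prems(2) \<open>j < n\<close>]
      by (rule sum_eq_single) (use off_terms \<open>j < n\<close> in auto)
    moreover have "(c * b) $$ (i,j) = 0" using c less.prems by simp
    ultimately show ?case using borel_mats_diag_nonzero[OF b, of j] less.prems by simp
  qed
  then have "upper_triangular c" using c(1) by (intro upper_triangularI) simp
  moreover have "det c * det b = 1"
    using det_mult[OF c(1) bc] c(2) by (metis det_one)
  ultimately have "c \<in> borel_mats n"
    using c(1) unfolding borel_mats_det by auto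
  then show thesis using c(2,3) by (rule that)
qed

definition borel_orbit :: "nat \<Rightarrow> 'a::conjugatable_field mat \<Rightarrow> 'a mat set" where
  "borel_orbit n z = {b * z * mat_adjoint b | b. b \<in> borel_mats n}"

lemma congruence_mult:
  assumes "a \<in> carrier_mat n n" "b \<in> carrier_mat n n" "z \<in> carrier_mat n n"
  shows "a * (b * z * mat_adjoint b) * mat_adjoint a = (a * b) * z * mat_adjoint (a * b)"
  using assms by (simp add: mat_adjoint_mult[of _ n n] assoc_mult_mat[of _ n n _ n _ n] mult_carrier_mat[of _ n n _ n])

lemma borel_orbit_carrier: "w \<in> borel_orbit n z \<Longrightarrow> z \<in> carrier_mat n n \<Longrightarrow> w \<in> carrier_mat n n"
proof -
  assume "w \<in> borel_orbit n z" "z \<in> carrier_mat n n"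
  then obtain b where "b \<in> carrier_mat n n" "w = b * z * mat_adjoint b"
    unfolding borel_orbit_def by (auto dest: borel_mats_carrier)
  with \<open>z \<in> carrier_mat n n\<close> show ?thesis by (simp add: mult_carrier_mat[of _ n n _ n])
qed

lemma borel_orbit_refl: "z \<in> carrier_mat n n \<Longrightarrow> z \<in> borel_orbit n z"
proof -
  assume "z \<in> carrier_mat n n"
  then have "z = 1\<^sub>m n * z * mat_adjoint (1\<^sub>m n)" by simp
  then show ?thesis unfolding borel_orbit_def using one_borel_mats by blast
qed

lemma borel_orbit_trans:
  assumes "w \<in> borel_orbit n z" "u \<in> borel_orbit n w" and z: "z \<in> carrier_mat n n"
  shows "u \<in> borel_orbit n z"
proof -
  obtain a b where "a \<in> borel_mats n" "b \<in> borel_mats n" "w = b * z * mat_adjoint b"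
    "u = a * w * mat_adjoint a"
    using assms unfolding borel_orbit_def by blast
  then show ?thesis
    unfolding borel_orbit_def
    using congruence_mult[OF borel_mats_carrier borel_mats_carrier z] borel_mats_mult by blast
qed

lemma borel_orbit_sym:
  assumes w: "w \<in> borel_orbit n z" and z: "z \<in> carrier_mat n n"
  shows "z \<in> borel_orbit n w"
proof -
  obtain b where b: "b \<in> borel_mats n" "w = b * z * mat_adjoint b"
    using w unfolding borel_orbit_def by blast
  obtain c where c: "c \<in> borel_mats n" "c * b = 1\<^sub>m n"
    using borel_mats_inverse[OF b(1)] by blast
  have "c * w * mat_adjoint c = (c * b) * z * mat_adjoint (c * b)"
    unfolding b(2) by (rule congruence_mult[OF borel_mats_carrier[OF c(1)] borel_mats_carrier[OF b(1)] z])
  also have "\<dots> = z" using c(2) z by simp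
  finally show ?thesis using c(1) unfolding borel_orbit_def by blast
qed

lemma borel_orbit_eq:
  assumes "w \<in> borel_orbit n z" "z \<in> carrier_mat n n"
  shows "borel_orbit n w = borel_orbit n z"
proof
  show "borel_orbit n w \<subseteq> borel_orbit n z"
    using borel_orbit_trans[OF assms(1) _ assms(2)] by blast
  show "borel_orbit n z \<subseteq> borel_orbit n w"
    using borel_orbit_trans[OF borel_orbit_sym[OF assms] _ borel_orbit_carrier[OF assms]] by blast
qed

definition hermitian_mats :: "nat \<Rightarrow> 'a::conjugatable_field mat set" where
  "hermitian_mats n = {z \<in> carrier_mat n n. mat_adjoint z = z}"

lemma hermitian_mats_iff:
  "z \<in> hermitian_mats n \<longleftrightarrow>
     z \<in> carrier_mat n n \<and> (\<forall>i<n. \<forall>j<n. z $$ (j,i) = conjugate (z $$ (i,j)))"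
proof
  assume "z \<in> hermitian_mats n"
  then have z: "z \<in> carrier_mat n n" and adj: "mat_adjoint z = z"
    unfolding hermitian_mats_def by auto
  have "\<forall>i<n. \<forall>j<n. z $$ (j,i) = conjugate (z $$ (i,j))"
  proof (intro allI impI)
    fix i j assume "i < n" "j < n"
    have "z $$ (j,i) = mat_adjoint z $$ (j,i)" using adj by simp
    also have "\<dots> = conjugate (z $$ (i,j))" using z \<open>i < n\<close> \<open>j < n\<close> by simp
    finally show "z $$ (j,i) = conjugate (z $$ (i,j))" .
  qed
  with z show "z \<in> carrier_mat n n \<and> (\<forall>i<n. \<forall>j<n. z $$ (j,i) = conjugate (z $$ (i,j)))" ..
next
  assume z: "z \<in> carrier_mat n n \<and> (\<forall>i<n. \<forall>j<n. z $$ (j,i) = conjugate (z $$ (i,j)))"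
  have "mat_adjoint z = z"
  proof (rule eq_matI)
    fix i j assume "i < dim_row z" "j < dim_col z"
    then show "mat_adjoint z $$ (i,j) = z $$ (i,j)"
      using z[THEN conjunct2, rule_format, of j i] z[THEN conjunct1] by simp
  qed (use z[THEN conjunct1] in auto)
  with z show "z \<in> hermitian_mats n" unfolding hermitian_mats_def by blast
qed

lemma hermitian_mats_carrier: "z \<in> hermitian_mats n \<Longrightarrow> z \<in> carrier_mat n n"
  unfolding hermitian_mats_def by blast

lemma hermitian_mats_entry:
  "z \<in> hermitian_mats n \<Longrightarrow> i < n \<Longrightarrow> j < n \<Longrightarrow> z $$ (j,i) = conjugate (z $$ (i,j))"
  unfolding hermitian_mats_iff by blast

lemma congruence_hermitian:
  assumes b: "b \<in> carrier_mat n n" and z: "z \<in> hermitian_mats n"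
  shows "b * z * mat_adjoint b \<in> hermitian_mats n"
proof -
  have zc: "z \<in> carrier_mat n n" "mat_adjoint z = z" using z unfolding hermitian_mats_def by auto
  have "mat_adjoint (b * z * mat_adjoint b) = mat_adjoint (mat_adjoint b) * mat_adjoint (b * z)"
    using b zc by (intro mat_adjoint_mult[of _ n n _ n]) auto
  also have "\<dots> = b * (mat_adjoint z * mat_adjoint b)"
    using mat_adjoint_mult[OF b zc(1)] by simp
  also have "\<dots> = b * z * mat_adjoint b"
    using b zc by (simp add: assoc_mult_mat[of _ n n _ n _ n])
  finally have "mat_adjoint (b * z * mat_adjoint b) = b * z * mat_adjoint b" .
  moreover have "b * z * mat_adjoint b \<in> carrier_mat n n"
    using b zc by (simp add: mult_carrier_mat[of _ n n _ n])
  ultimately show ?thesis unfolding hermitian_mats_def by blast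
qed

lemma borel_orbit_hermitian: "z \<in> hermitian_mats n \<Longrightarrow> w \<in> borel_orbit n z \<Longrightarrow> w \<in> hermitian_mats n"
  unfolding borel_orbit_def using congruence_hermitian borel_mats_carrier by blast

definition rank_one_update :: "nat \<Rightarrow> (nat \<Rightarrow> 'a) \<Rightarrow> (nat \<Rightarrow> 'a) \<Rightarrow> 'a::semiring_1 mat" where
  "rank_one_update n x y = mat n n (\<lambda>(j,l). of_bool (j = l) + x j * y l)"

lemma rank_one_update_carrier [simp]: "rank_one_update n x y \<in> carrier_mat n n"
  unfolding rank_one_update_def by simp

lemma rank_one_update_dim [simp]:
  "dim_row (rank_one_update n x y) = n" "dim_col (rank_one_update n x y) = n"
  unfolding rank_one_update_def by simp_all

lemma rank_one_update_index [simp]: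
  "j < n \<Longrightarrow> l < n \<Longrightarrow> rank_one_update n x y $$ (j,l) = of_bool (j = l) + x j * y l"
  unfolding rank_one_update_def by simp

lemma rank_one_update_borel:
  assumes "\<And>j l. l < j \<Longrightarrow> j < n \<Longrightarrow> x j * y l = 0"
    and "\<And>j. j < n \<Longrightarrow> 1 + x j * y j \<noteq> (0::'a::field)"
  shows "rank_one_update n x y \<in> borel_mats n"
  unfolding borel_mats_iff_diag using assms by auto

lemma mat_adjoint_rank_one_update:
  "mat_adjoint (rank_one_update n x y) = rank_one_update n (conjugate \<circ> y) (conjugate \<circ> x)"
  by (rule eq_matI) (auto simp: conjugate_dist_add conjugate_dist_mul)

lemma rank_one_update_mult_index:
  assumes "z \<in> carrier_mat n m" "j < n" "l < m"
  shows "(rank_one_update n x y * z) $$ (j,l) = z $$ (j,l) + x j * (\<Sum>p<n. y p * z $$ (p,l))"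
  unfolding index_mult_mat_sum[OF rank_one_update_carrier assms]
  using assms by (simp add: ring_distribs sum.distrib sum_distrib_left mult.assoc)

lemma mult_rank_one_update_index:
  assumes "z \<in> carrier_mat m n" "j < m" "l < n"
  shows "(z * rank_one_update n x y) $$ (j,l) = z $$ (j,l) + (\<Sum>q<n. z $$ (j,q) * x q) * y l"
  unfolding index_mult_mat_sum[OF assms(1) rank_one_update_carrier assms(2,3)]
  using assms by (simp add: ring_distribs sum.distrib sum_distrib_right mult.assoc)

lemma rank_one_congruence_index:
  fixes x y :: "nat \<Rightarrow> 'a::conjugatable_field"
  assumes z: "z \<in> carrier_mat n n" and jl: "j < n" "l < n"
  shows "(rank_one_update n x y * z * mat_adjoint (rank_one_update n x y)) $$ (j,l) =
    z $$ (j,l) + x j * (\<Sum>p<n. y p * z $$ (p,l)) +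
    conjugate (x l) * (\<Sum>q<n. (z $$ (j,q) + x j * (\<Sum>p<n. y p * z $$ (p,q))) * conjugate (y q))"
proof -
  let ?g = "rank_one_update n x y"
  have gz: "?g * z \<in> carrier_mat n n" using z by (simp add: mult_carrier_mat[of _ n n _ n])
  have "(?g * z * mat_adjoint ?g) $$ (j,l) =
      (?g * z) $$ (j,l) + (\<Sum>q<n. (?g * z) $$ (j,q) * conjugate (y q)) * conjugate (x l)"
    unfolding mat_adjoint_rank_one_update mult_rank_one_update_index[OF gz jl] by simp
  then show ?thesis
    using z jl by (simp add: rank_one_update_mult_index mult.commute del: index_mult_mat)
qed

lemma unit_rank_one_congruence_index:
  fixes x :: "nat \<Rightarrow> 'a::conjugatable_field"
  assumes z: "z \<in> carrier_mat n n" and jl: "j < n" "l < n" and k: "k < n"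
  defines "g \<equiv> rank_one_update n x (\<lambda>q. of_bool (q = k))"
  shows "(g * z * mat_adjoint g) $$ (j,l) =
    z $$ (j,l) + x j * z $$ (k,l) + conjugate (x l) * (z $$ (j,k) + x j * z $$ (k,k))"
proof -
  have unit_sum: "(\<Sum>p<n. of_bool (p = k) * f p) = f k" for f :: "nat \<Rightarrow> 'a"
    using k by (subst sum_eq_single[of _ k]) auto
  have unit_sum': "(\<Sum>p<n. f p * of_bool (p = k)) = f k" for f :: "nat \<Rightarrow> 'a"
    using unit_sum[of f] by (simp add: mult.commute)
  show ?thesis
    unfolding g_def rank_one_congruence_index[OF z jl] by (simp add: unit_sum unit_sum')
qed

section \<open>Existence of the normal form\<close>

text \<open>Only rows are required to have at most one nonzero entry: for Hermitian matrices this
  gives the same for columns.\<close>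
definition spi_plus_block :: "nat \<Rightarrow> nat \<Rightarrow> 'a::ring_1 mat \<Rightarrow> bool" where
  "spi_plus_block i n z \<longleftrightarrow>
     (\<forall>j\<in>{i..<n}. \<forall>k\<in>{i..<n}. z $$ (j,k) \<in> {-1,0,1} \<and> (j \<noteq> k \<longrightarrow> z $$ (j,k) \<in> {0,1})) \<and>
     (\<forall>j\<in>{i..<n}. \<forall>k\<in>{i..<n}. \<forall>l\<in>{i..<n}. z $$ (j,k) \<noteq> 0 \<longrightarrow> z $$ (j,l) \<noteq> 0 \<longrightarrow> k = l)"

lemma spi_plus_blockD:
  assumes "spi_plus_block i n z" "j \<in> {i..<n}" "k \<in> {i..<n}"
  shows spi_plus_block_entry: "z $$ (j,k) \<in> {-1,0,1}"
    and spi_plus_block_off_diag: "j \<noteq> k \<Longrightarrow> z $$ (j,k) \<in> {0,1}"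
    and spi_plus_block_row_unique: "l \<in> {i..<n} \<Longrightarrow> z $$ (j,k) \<noteq> 0 \<Longrightarrow> z $$ (j,l) \<noteq> 0 \<Longrightarrow> k = l"
  using assms unfolding spi_plus_block_def by blast+

lemma spi_plus_block_col_unique:
  assumes z: "z \<in> hermitian_mats n" "spi_plus_block i n z" and "j \<in> {i..<n}" "k \<in> {i..<n}" "l \<in> {i..<n}"
    and "z $$ (k,j) \<noteq> 0" "z $$ (l,j) \<noteq> 0"
  shows "k = l"
  using assms spi_plus_block_row_unique[OF z(2), of j k l] hermitian_mats_entry[OF z(1), of j k]
    hermitian_mats_entry[OF z(1), of j l] by auto

lemma spi_plus_block_empty: "spi_plus_block n n z"
  unfolding spi_plus_block_def by simp

lemma spi_plus_block_cong:
  assumes "spi_plus_block i n z" and "\<And>j k. j \<in> {i..<n} \<Longrightarrow> k \<in> {i..<n} \<Longrightarrow> w $$ (j,k) = z $$ (j,k)"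
  shows "spi_plus_block i n w"
  using assms unfolding spi_plus_block_def by (metis (no_types, lifting))

lemma spi_plus_block_extend:
  assumes w: "w \<in> hermitian_mats n" and blk: "spi_plus_block (Suc i) n w" and c: "i \<le> c" "c < n"
    and row: "\<And>l. i \<le> l \<Longrightarrow> l < n \<Longrightarrow> l \<noteq> c \<Longrightarrow> w $$ (i,l) = 0"
    and val: "w $$ (i,c) \<in> (if c = i then {-1,0,1} else {0,1})"
    and pivot: "\<And>l. c \<noteq> i \<Longrightarrow> Suc i \<le> l \<Longrightarrow> l < n \<Longrightarrow> w $$ (c,l) = 0"
  shows "spi_plus_block i n w"
proof -
  have i: "i < n" using c by simp
  have val': "w $$ (i,c) \<in> {-1,0,1}" using val by (auto split: if_splits)
  have col: "w $$ (j,i) = (if j = c then w $$ (i,c) else 0)" if "i < j" "j < n" for j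
    using hermitian_mats_entry[OF w i that(2)] row[of j] that conjugate_sign[OF val'] by auto
  have entry: "w $$ (j,l) \<in> {-1,0,1} \<and> (j \<noteq> l \<longrightarrow> w $$ (j,l) \<in> {0,1})"
    if "j \<in> {i..<n}" "l \<in> {i..<n}" for j l
  proof (cases "j = i \<or> l = i")
    case True
    then show ?thesis using that row[of l] col[of j] val by (cases "j = i") (auto split: if_splits)
  next
    case False
    then show ?thesis using that spi_plus_blockD(1,2)[OF blk, of j l] by auto
  qed
  have unique: "k = l"
    if jkl: "j \<in> {i..<n}" "k \<in> {i..<n}" "l \<in> {i..<n}" and nz: "w $$ (j,k) \<noteq> 0" "w $$ (j,l) \<noteq> 0"
    for j k l
  proof -
    have col_nz: "j = c \<and> c \<noteq> i \<and> m = i" if "w $$ (j,i) \<noteq> 0" "j \<noteq> i" "m \<in> {i..<n}" "w $$ (j,m) \<noteq> 0" for m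
      using that jkl col[of j] pivot[of m] by (cases "m = i") (auto split: if_splits)
    show ?thesis
    proof (cases "j = i")
      case True
      then show ?thesis using jkl nz row[of k] row[of l] by fastforce
    next
      case False
      show ?thesis
      proof (cases "k = i \<or> l = i")
        case True
        then show ?thesis using col_nz[of k] col_nz[of l] jkl nz False by auto
      next
        case False
        then show ?thesis using jkl nz spi_plus_block_row_unique[OF blk, of j k l] \<open>j \<noteq> i\<close> by auto
      qed
    qed
  qed
  show ?thesis unfolding spi_plus_block_def using entry unique by blast
qed

lemma spi_plus_block_column_sum:
  assumes z: "z \<in> hermitian_mats n" "spi_plus_block (Suc i) n z"
    and l: "l \<in> {Suc i..<n}" "l' \<in> {Suc i..<n}"
  shows "(\<Sum>q\<in>{Suc i..<n}. z $$ (q,l') * z $$ (q,l)) =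
    of_bool (l' = l \<and> (\<exists>q\<in>{Suc i..<n}. z $$ (q,l) \<noteq> 0))"
proof (cases "\<exists>q\<in>{Suc i..<n}. z $$ (q,l) \<noteq> 0")
  case True
  then obtain q0 where q0: "q0 \<in> {Suc i..<n}" "z $$ (q0,l) \<noteq> 0" by blast
  have "z $$ (q,l) = 0" if "q \<in> {Suc i..<n}" "q \<noteq> q0" for q
    using spi_plus_block_col_unique[OF z l(1) that(1) q0(1)] q0(2) that(2) by blast
  then have "(\<Sum>q\<in>{Suc i..<n}. z $$ (q,l') * z $$ (q,l)) = z $$ (q0,l') * z $$ (q0,l)"
    using q0(1) by (intro sum_eq_single) simp_all
  also have "\<dots> = of_bool (l' = l)"
    using q0 l spi_plus_block_entry[OF z(2), of q0 l] spi_plus_block_row_unique[OF z(2), of q0 l' l]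
    by (cases "l' = l") auto
  finally show ?thesis using True by simp
qed auto

lemma spi_plus_block_pivot_combination:
  assumes z: "z \<in> hermitian_mats n" "spi_plus_block (Suc i) n z" and l: "l \<in> {Suc i..<n}"
  shows "(\<Sum>p\<in>{Suc i..<n}. (\<Sum>l'\<in>{Suc i..<n}. z $$ (i,l') * z $$ (p,l')) * z $$ (p,l)) =
    of_bool (\<exists>q\<in>{Suc i..<n}. z $$ (q,l) \<noteq> 0) * z $$ (i,l)"
proof -
  let ?U = "{Suc i..<n}" and ?E = "\<exists>q\<in>{Suc i..<n}. z $$ (q,l) \<noteq> 0"
  have "(\<Sum>p\<in>?U. (\<Sum>l'\<in>?U. z $$ (i,l') * z $$ (p,l')) * z $$ (p,l)) =
      (\<Sum>p\<in>?U. \<Sum>l'\<in>?U. z $$ (i,l') * (z $$ (p,l') * z $$ (p,l)))"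
    by (simp add: sum_distrib_right mult.assoc)
  also have "\<dots> = (\<Sum>l'\<in>?U. z $$ (i,l') * (\<Sum>p\<in>?U. z $$ (p,l') * z $$ (p,l)))"
    by (subst sum.swap) (simp add: sum_distrib_left)
  also have "\<dots> = (\<Sum>l'\<in>?U. z $$ (i,l') * of_bool (l' = l \<and> ?E))"
    using spi_plus_block_column_sum[OF z l] by simp
  also have "\<dots> = of_bool ?E * z $$ (i,l)"
    using l by (cases ?E) (simp_all add: sum_eq_single[of _ l])
  finally show ?thesis .
qed

lemma clear_row_above_pivots:
  fixes z :: "'a::conjugatable_field mat"
  assumes z: "z \<in> hermitian_mats n" and blk: "spi_plus_block (Suc i) n z" and i: "i < n"
  obtains w where "w \<in> borel_orbit n z" "spi_plus_block (Suc i) n w"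
    "\<And>l q. l \<in> {Suc i..<n} \<Longrightarrow> q \<in> {Suc i..<n} \<Longrightarrow> w $$ (i,l) \<noteq> 0 \<Longrightarrow> w $$ (q,l) = 0"
proof -
  let ?U = "{Suc i..<n}"
  define x :: "nat \<Rightarrow> 'a" where "x j = of_bool (j = i)" for j
  \<comment> \<open>subtract \<open>z $$ (i,l')\<close> times row \<open>q\<close> for every pivot \<open>(q,l')\<close> of the block\<close>
  define y where "y q = (if q \<in> ?U then - (\<Sum>l'\<in>?U. z $$ (i,l') * z $$ (q,l')) else 0)" for q
  define g where "g = rank_one_update n x y"
  define w where "w = g * z * mat_adjoint g"
  have zc: "z \<in> carrier_mat n n" using z by (rule hermitian_mats_carrier)
  have "g \<in> borel_mats n" unfolding g_def by (rule rank_one_update_borel) (auto simp: x_def y_def)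
  then have orbit: "w \<in> borel_orbit n z" unfolding w_def borel_orbit_def by blast
  have pivot_sum: "(\<Sum>p<n. y p * z $$ (p,l)) = - of_bool (\<exists>q\<in>?U. z $$ (q,l) \<noteq> 0) * z $$ (i,l)"
    if "l \<in> ?U" for l
  proof -
    have "(\<Sum>p<n. y p * z $$ (p,l)) = (\<Sum>p\<in>?U. y p * z $$ (p,l))"
      by (rule sum.mono_neutral_right) (auto simp: y_def)
    then show ?thesis
      using spi_plus_block_pivot_combination[OF z blk that] by (simp add: y_def sum_negf)
  qed
  have entry: "w $$ (j,l) = z $$ (j,l) + x j * (\<Sum>p<n. y p * z $$ (p,l)) +
      conjugate (x l) * (\<Sum>q<n. (z $$ (j,q) + x j * (\<Sum>p<n. y p * z $$ (p,q))) * conjugate (y q))"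
    if "j < n" "l < n" for j l
    unfolding w_def g_def by (rule rank_one_congruence_index[OF zc that])
  have block: "w $$ (j,l) = z $$ (j,l)" if "j \<in> ?U" "l \<in> ?U" for j l
    using that by (simp add: entry x_def)
  have row: "w $$ (i,l) = (if \<exists>q\<in>?U. z $$ (q,l) \<noteq> 0 then 0 else z $$ (i,l))" if "l \<in> ?U" for l
    using that i pivot_sum[OF that] by (simp add: entry x_def)
  show thesis
  proof (rule that[OF orbit])
    show "spi_plus_block (Suc i) n w" using blk block by (rule spi_plus_block_cong)
    show "w $$ (q,l) = 0" if "l \<in> ?U" "q \<in> ?U" "w $$ (i,l) \<noteq> 0" for l q
      using that row[of l] block[of q l] by (auto split: if_splits)
  qed
qed

lemma normalise_diagonal_row:
  fixes z :: "'a::conjugatable_field mat"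
  assumes unit_scaling: "\<And>a::'a. conjugate a = a \<Longrightarrow> a \<noteq> 0 \<Longrightarrow> \<exists>p. p * a * conjugate p \<in> {1,-1}"
    and z: "z \<in> hermitian_mats n" and blk: "spi_plus_block (Suc i) n z" and i: "i < n"
    and zero_row: "\<And>l. l \<in> {Suc i..<n} \<Longrightarrow> z $$ (i,l) = 0"
  obtains w where "w \<in> borel_orbit n z" "spi_plus_block i n w"
proof -
  define a where "a = z $$ (i,i)"
  have "conjugate a = a" unfolding a_def using hermitian_mats_entry[OF z i i] by simp
  obtain p where p: "p \<noteq> 0" "p * a * conjugate p \<in> {-1,0,1}"
  proof (cases "a = 0")
    case False
    then obtain p where "p * a * conjugate p \<in> {1,-1}" using unit_scaling \<open>conjugate a = a\<close> by blast
    moreover from this have "p \<noteq> 0" by auto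
    ultimately show thesis using that by auto
  qed (use that[of 1] in simp)
  define x :: "nat \<Rightarrow> 'a" where "x j = of_bool (j = i) * (p - 1)" for j
  define g where "g = rank_one_update n x (\<lambda>q. of_bool (q = i))"
  define w where "w = g * z * mat_adjoint g"
  have zc: "z \<in> carrier_mat n n" using z by (rule hermitian_mats_carrier)
  have "g \<in> borel_mats n" unfolding g_def by (rule rank_one_update_borel) (use p in \<open>auto simp: x_def\<close>)
  then have orbit: "w \<in> borel_orbit n z" unfolding w_def borel_orbit_def by blast
  have entry: "w $$ (j,l) = z $$ (j,l) + x j * z $$ (i,l) + conjugate (x l) * (z $$ (j,i) + x j * z $$ (i,i))"
    if "j < n" "l < n" for j l
    unfolding w_def g_def by (rule unit_rank_one_congruence_index[OF zc that i])
  have "w $$ (i,i) = p * a * conjugate p"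
    using i by (simp add: entry x_def a_def conjugate_diff algebra_simps)
  moreover have "spi_plus_block (Suc i) n w"
    using blk by (rule spi_plus_block_cong) (simp add: entry x_def)
  ultimately have "spi_plus_block i n w"
    using i p zero_row by (intro spi_plus_block_extend[of w n i i]) (auto simp: entry x_def borel_orbit_hermitian[OF z orbit])
  with orbit show thesis by (rule that)
qed

text \<open>Adding multiples of a row \<open>k\<close> that vanishes on the block to the rows \<open>i, \<dots>, k\<close>
  turns column \<open>i\<close> below the diagonal into the unit vector \<open>e\<^sub>k\<close> and kills the diagonal entry.\<close>
lemma pivot_row_congruence:
  fixes z :: "'a::conjugatable_field mat"
  assumes two: "(2::'a) \<noteq> 0" and z: "z \<in> hermitian_mats n" and k: "i < k" "k < n"
    and u: "z $$ (k,i) \<noteq> 0"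
    and row_k: "\<And>q. q \<in> {Suc i..<n} \<Longrightarrow> z $$ (k,q) = 0"
    and beyond_k: "\<And>j. k < j \<Longrightarrow> j < n \<Longrightarrow> z $$ (j,i) = 0"
  obtains w where "w \<in> borel_orbit n z"
    "\<And>j l. j \<in> {Suc i..<n} \<Longrightarrow> l \<in> {Suc i..<n} \<Longrightarrow> w $$ (j,l) = z $$ (j,l)"
    "\<And>j. j \<in> {Suc i..<n} \<Longrightarrow> w $$ (j,i) = of_bool (j = k)"
    "w $$ (i,i) = 0"
proof -
  let ?U = "{Suc i..<n}"
  define u where "u = z $$ (k,i)"
  define a where "a = z $$ (i,i)"
  have i: "i < n" using k by simp
  have col_k: "z $$ (q,k) = 0" if "q \<in> ?U" for q
    using hermitian_mats_entry[OF z, of k q] row_k[OF that] k that by simp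
  have z_entries: "z $$ (i,i) = a" "z $$ (k,i) = u" "z $$ (i,k) = conjugate u" "z $$ (k,k) = 0"
    using hermitian_mats_entry[OF z i, of k] k row_k[of k] unfolding a_def u_def by auto
  have "conjugate a = a" unfolding a_def using hermitian_mats_entry[OF z i i] by simp
  define x :: "nat \<Rightarrow> 'a" where
    "x j = (if j = i then - a / (2 * u) else if j \<in> ?U \<and> j \<le> k then (of_bool (j = k) - z $$ (j,i)) / u else 0)"
    for j
  define g where "g = rank_one_update n x (\<lambda>q. of_bool (q = k))"
  define w where "w = g * z * mat_adjoint g"
  have zc: "z \<in> carrier_mat n n" using z by (rule hermitian_mats_carrier)
  have "x k = (1 - u) / u" using k by (simp add: x_def u_def)
  then have "1 + x k = 1 / u" using u by (simp add: field_simps u_def)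
  then have "g \<in> borel_mats n"
    unfolding g_def using k u by (intro rank_one_update_borel) (auto simp: x_def u_def)
  then have orbit: "w \<in> borel_orbit n z" unfolding w_def borel_orbit_def by blast
  have entry: "w $$ (j,l) = z $$ (j,l) + x j * z $$ (k,l) + conjugate (x l) * (z $$ (j,k) + x j * z $$ (k,k))"
    if "j < n" "l < n" for j l
    unfolding w_def g_def using k by (intro unit_rank_one_congruence_index[OF zc that]) auto
  have xu: "x i * u = - a / 2" using u by (simp add: x_def u_def)
  have "w $$ (i,i) = a + x i * u + conjugate (x i * u)"
    using i k by (simp add: entry z_entries conjugate_dist_mul)
  also have "\<dots> = 0"
    unfolding xu using two \<open>conjugate a = a\<close> by (simp add: conjugate_half conjugate_neg field_simps)
  finally have "w $$ (i,i) = 0" .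
  moreover have "w $$ (j,l) = z $$ (j,l)" if "j \<in> ?U" "l \<in> ?U" for j l
    using that k by (simp add: entry row_k col_k)
  moreover have "w $$ (j,i) = of_bool (j = k)" if "j \<in> ?U" for j
    using that k u i beyond_k[of j] by (auto simp: entry col_k x_def u_def)
  ultimately show thesis using orbit that by blast
qed

lemma normalise_pivot_row:
  fixes z :: "'a::conjugatable_field mat"
  assumes two: "(2::'a) \<noteq> 0"
    and z: "z \<in> hermitian_mats n" and blk: "spi_plus_block (Suc i) n z" and i: "i < n"
    and nonzero_row: "\<exists>l\<in>{Suc i..<n}. z $$ (i,l) \<noteq> 0"
    and cleared:
      "\<And>l q. l \<in> {Suc i..<n} \<Longrightarrow> q \<in> {Suc i..<n} \<Longrightarrow> z $$ (i,l) \<noteq> 0 \<Longrightarrow> z $$ (q,l) = 0"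
  obtains w where "w \<in> borel_orbit n z" "spi_plus_block i n w"
proof -
  let ?U = "{Suc i..<n}"
  define K where "K = {l\<in>?U. z $$ (i,l) \<noteq> 0}"
  define k where "k = Max K"
  have K: "finite K" "K \<noteq> {}" using nonzero_row unfolding K_def by auto
  have "k \<in> K" unfolding k_def using K by (rule Max_in)
  then have k: "k \<in> ?U" "z $$ (i,k) \<noteq> 0" unfolding K_def by auto
  have beyond_k: "z $$ (j,i) = 0" if "k < j" "j < n" for j
  proof -
    have "j \<notin> K" using Max_ge[OF K(1)] that(1) unfolding k_def by fastforce
    then show ?thesis using hermitian_mats_entry[OF z i, of j] that k(1) unfolding K_def by auto
  qed
  have row_k: "z $$ (k,q) = 0" if "q \<in> ?U" for q
    using hermitian_mats_entry[OF z, of q k] cleared[OF k(1) that k(2)] k(1) that by simp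
  have "z $$ (k,i) \<noteq> 0" using hermitian_mats_entry[OF z i, of k] k by simp
  then obtain w where orbit: "w \<in> borel_orbit n z"
    and block: "\<And>j l. j \<in> ?U \<Longrightarrow> l \<in> ?U \<Longrightarrow> w $$ (j,l) = z $$ (j,l)"
    and col_i: "\<And>j. j \<in> ?U \<Longrightarrow> w $$ (j,i) = of_bool (j = k)"
    and diag: "w $$ (i,i) = 0"
    using pivot_row_congruence[OF two z _ _ _ row_k beyond_k] k(1) by auto
  have w: "w \<in> hermitian_mats n" using borel_orbit_hermitian[OF z orbit] .
  have row_i: "w $$ (i,l) = of_bool (l = k)" if "l \<in> ?U" for l
    using hermitian_mats_entry[OF w, of l i] col_i[OF that] that by simp
  have blk_w: "spi_plus_block (Suc i) n w" using blk block by (rule spi_plus_block_cong)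
  have "spi_plus_block i n w"
  proof (rule spi_plus_block_extend[OF w blk_w, where c = k])
    show "i \<le> k" "k < n" using k by auto
    show "w $$ (i,l) = 0" if "i \<le> l" "l < n" "l \<noteq> k" for l
      using that diag row_i[of l] by (cases "l = i") auto
    show "w $$ (i,k) \<in> (if k = i then {-1,0,1} else {0,1})" using row_i[OF k(1)] k by auto
    show "w $$ (k,l) = 0" if "Suc i \<le> l" "l < n" for l
      using block[of k l] row_k[of l] k that by auto
  qed
  with orbit show thesis by (rule that)
qed

lemma spi_plus_block_step:
  fixes z :: "'a::conjugatable_field mat"
  assumes unit_scaling: "\<And>a::'a. conjugate a = a \<Longrightarrow> a \<noteq> 0 \<Longrightarrow> \<exists>p. p * a * conjugate p \<in> {1,-1}"
    and two: "(2::'a) \<noteq> 0"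
    and z: "z \<in> hermitian_mats n" and blk: "spi_plus_block (Suc i) n z" and i: "i < n"
  obtains w where "w \<in> borel_orbit n z" "spi_plus_block i n w"
proof -
  obtain v where v: "v \<in> borel_orbit n z" "spi_plus_block (Suc i) n v"
    and cleared:
      "\<And>l q. l \<in> {Suc i..<n} \<Longrightarrow> q \<in> {Suc i..<n} \<Longrightarrow> v $$ (i,l) \<noteq> 0 \<Longrightarrow> v $$ (q,l) = 0"
    using clear_row_above_pivots[OF z blk i] by blast
  have vh: "v \<in> hermitian_mats n" using borel_orbit_hermitian[OF z v(1)] .
  obtain w where w: "w \<in> borel_orbit n v" "spi_plus_block i n w"
  proof (cases "\<exists>l\<in>{Suc i..<n}. v $$ (i,l) \<noteq> 0")
    case True
    then show thesis using normalise_pivot_row[OF two vh v(2) i True cleared] that by blast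
  next
    case False
    then show thesis using normalise_diagonal_row[OF unit_scaling vh v(2) i] that by blast
  qed
  show thesis
    using that borel_orbit_trans[OF v(1) w(1) hermitian_mats_carrier[OF z]] w(2) .
qed

lemma spi_plus_normal_form_exists:
  fixes z :: "'a::conjugatable_field mat"
  assumes unit_scaling: "\<And>a::'a. conjugate a = a \<Longrightarrow> a \<noteq> 0 \<Longrightarrow> \<exists>p. p * a * conjugate p \<in> {1,-1}"
    and two: "(2::'a) \<noteq> 0" and z: "z \<in> hermitian_mats n"
  obtains w where "w \<in> borel_orbit n z" "spi_plus_block 0 n w"
proof -
  have zc: "z \<in> carrier_mat n n" using z by (rule hermitian_mats_carrier)
  have "\<exists>w\<in>borel_orbit n z. spi_plus_block (n - d) n w" if "d \<le> n" for d
    using that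
  proof (induction d)
    case 0
    show ?case using borel_orbit_refl[OF zc] spi_plus_block_empty by auto
  next
    case (Suc d)
    then obtain v where v: "v \<in> borel_orbit n z" "spi_plus_block (Suc (n - Suc d)) n v"
      by (auto simp: Suc_diff_Suc)
    obtain w where "w \<in> borel_orbit n v" "spi_plus_block (n - Suc d) n w"
      using spi_plus_block_step[OF unit_scaling two borel_orbit_hermitian[OF z v(1)] v(2)] Suc.prems by auto
    then show ?case using borel_orbit_trans[OF v(1) _ zc] by blast
  qed
  from this[of n] show thesis using that by auto
qed

section \<open>Uniqueness of the normal form\<close>

lemma upper_triangular_mult_diag:
  assumes A: "A \<in> carrier_mat n n" "upper_triangular A" and B: "B \<in> carrier_mat n n" "upper_triangular B"
    and i: "i < n"
  shows "(A * B) $$ (i,i) = A $$ (i,i) * B $$ (i,i)"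
proof -
  have "A $$ (i,k) * B $$ (k,i) = 0" if "k < n" "k \<noteq> i" for k
    using A B that i upper_triangularD[of A k i] upper_triangularD[of B i k] by (cases "k < i") auto
  then show ?thesis
    unfolding index_mult_mat_sum[OF A(1) B(1) i i] using i by (intro sum_eq_single) auto
qed

lemma congruence_cancel:
  assumes b: "b \<in> carrier_mat n n" and c: "c \<in> carrier_mat n n" and z: "z \<in> carrier_mat n n"
    and cb: "c * b = 1\<^sub>m n" and w: "w = b * z * mat_adjoint b"
  shows "w * mat_adjoint c = b * z"
proof -
  have "w * mat_adjoint c = b * z * (mat_adjoint b * mat_adjoint c)"
    unfolding w using b c z by (simp add: assoc_mult_mat[of _ n n _ n _ n] mult_carrier_mat[of _ n n _ n])
  also have "mat_adjoint b * mat_adjoint c = 1\<^sub>m n"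
    using mat_adjoint_mult[OF c b] cb by simp
  finally show ?thesis using b z by (simp add: mult_carrier_mat[of _ n n _ n])
qed

lemma borel_orbit_cancel:
  assumes w: "w \<in> borel_orbit n z" and z: "z \<in> carrier_mat n n"
  obtains b c where "b \<in> borel_mats n" "c \<in> borel_mats n" "c * b = 1\<^sub>m n"
    "w * mat_adjoint c = b * z" "z * mat_adjoint b = c * w"
proof -
  obtain b where b: "b \<in> borel_mats n" "w = b * z * mat_adjoint b"
    using w unfolding borel_orbit_def by blast
  obtain c where c: "c \<in> borel_mats n" "c * b = 1\<^sub>m n" "b * c = 1\<^sub>m n"
    using borel_mats_inverse[OF b(1)] by blast
  have bc: "b \<in> carrier_mat n n" "c \<in> carrier_mat n n"
    using b(1) c(1) by (auto dest: borel_mats_carrier)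
  have "c * w * mat_adjoint c = (c * b) * z * mat_adjoint (c * b)"
    unfolding b(2) by (rule congruence_mult[OF bc(2) bc(1) z])
  then have z_back: "z = c * w * mat_adjoint c" using c(2) z by simp
  have "w * mat_adjoint c = b * z" by (rule congruence_cancel[OF bc z c(2) b(2)])
  moreover have "z * mat_adjoint b = c * w"
    by (rule congruence_cancel[OF bc(2,1) borel_orbit_carrier[OF w z] c(3) z_back])
  ultimately show thesis using that b(1) c(1,2) by blast
qed

lemma congruence_isolated_diag:
  fixes b c z w :: "'a::conjugatable_field mat"
  assumes b: "b \<in> carrier_mat n n" "upper_triangular b" and c: "c \<in> carrier_mat n n" "upper_triangular c"
    and z: "z \<in> carrier_mat n n" and w: "w \<in> carrier_mat n n"
    and cb: "c * b = 1\<^sub>m n" and eq: "w * mat_adjoint c = b * z" and i: "i < n"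
    and w_row: "\<And>q. q < n \<Longrightarrow> q \<noteq> i \<Longrightarrow> w $$ (i,q) = 0"
    and z_col: "\<And>p. p < n \<Longrightarrow> p \<noteq> i \<Longrightarrow> z $$ (p,i) = 0"
  shows "w $$ (i,i) = b $$ (i,i) * z $$ (i,i) * conjugate (b $$ (i,i))"
proof -
  have "(w * mat_adjoint c) $$ (i,i) = w $$ (i,i) * conjugate (c $$ (i,i))"
    unfolding index_mult_mat_sum[OF w mat_adjoint_carrier[OF c(1)] i i]
    using c(1) i w_row by (subst sum_eq_single[of _ i]) auto
  moreover have "(b * z) $$ (i,i) = b $$ (i,i) * z $$ (i,i)"
    unfolding index_mult_mat_sum[OF b(1) z i i] using i z_col by (subst sum_eq_single[of _ i]) auto
  ultimately have wc: "w $$ (i,i) * conjugate (c $$ (i,i)) = b $$ (i,i) * z $$ (i,i)"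
    using eq by metis
  have "c $$ (i,i) * b $$ (i,i) = 1"
    using upper_triangular_mult_diag[OF c b i] cb i by simp
  then have "w $$ (i,i) = w $$ (i,i) * conjugate (c $$ (i,i)) * conjugate (b $$ (i,i))"
    by (metis conjugate_dist_mul conjugate_one mult.assoc mult_1_right)
  with wc show ?thesis by simp
qed

lemma spi_plus_block_pivot_propagates:
  fixes b c z w :: "'a::conjugatable_field mat"
  assumes z: "z \<in> hermitian_mats n" "spi_plus_block 0 n z" and w: "w \<in> carrier_mat n n"
    and b: "b \<in> borel_mats n" and c: "c \<in> borel_mats n"
    and eq: "w * mat_adjoint c = b * z" and ik: "i < k" "k < n" and nz: "z $$ (i,k) \<noteq> 0"
  shows "\<exists>q\<in>{k..<n}. w $$ (i,q) \<noteq> 0"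
proof (rule ccontr)
  assume "\<not> ?thesis"
  then have w_zero: "w $$ (i,q) = 0" if "k \<le> q" "q < n" for q using that by auto
  have bc: "b \<in> carrier_mat n n" "c \<in> carrier_mat n n" using b c by (auto dest: borel_mats_carrier)
  have i: "i < n" using ik by simp
  have terms: "w $$ (i,q) * mat_adjoint c $$ (q,k) = 0" if "q \<in> {..<n}" for q
    using that bc(2) ik w_zero[of q] borel_mats_lower_zero[OF c ik(2), of q] by (cases "k \<le> q") auto
  have "(w * mat_adjoint c) $$ (i,k) = 0"
    unfolding index_mult_mat_sum[OF w mat_adjoint_carrier[OF bc(2)] i ik(2)]
    by (rule sum.neutral) (use terms in blast)
  moreover have "(b * z) $$ (i,k) = b $$ (i,i) * z $$ (i,k)"
  proof -
    have "z $$ (p,k) = 0" if "p < n" "p \<noteq> i" for p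
      using spi_plus_block_col_unique[OF z, of k p i] that ik nz by auto
    then show ?thesis
      unfolding index_mult_mat_sum[OF bc(1) hermitian_mats_carrier[OF z(1)] i ik(2)] using i
      by (subst sum_eq_single[of _ i]) auto
  qed
  ultimately show False using eq borel_mats_diag_nonzero[OF b, of i] ik nz by simp
qed

text \<open>Applied in both directions, the previous lemma shows that pivots cannot move.\<close>
lemma spi_plus_block_support_eq:
  fixes b c z w :: "'a::conjugatable_field mat"
  assumes z: "z \<in> hermitian_mats n" "spi_plus_block 0 n z" and w: "w \<in> hermitian_mats n" "spi_plus_block 0 n w"
    and b: "b \<in> borel_mats n" and c: "c \<in> borel_mats n"
    and eq_w: "w * mat_adjoint c = b * z" and eq_z: "z * mat_adjoint b = c * w"
    and ik: "i < k" "k < n" and nz: "z $$ (i,k) \<noteq> 0"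
  shows "w $$ (i,k) \<noteq> 0"
proof -
  obtain q where q: "k \<le> q" "q < n" "w $$ (i,q) \<noteq> 0"
    using spi_plus_block_pivot_propagates[OF z hermitian_mats_carrier[OF w(1)] b c eq_w ik nz] by auto
  obtain q' where q': "q \<le> q'" "q' < n" "z $$ (i,q') \<noteq> 0"
    using spi_plus_block_pivot_propagates[OF w hermitian_mats_carrier[OF z(1)] c b eq_z _ q(2,3)] ik q(1)
    by auto
  have "k = q'" using spi_plus_block_row_unique[OF z(2), of i k q'] ik q' nz by simp
  with q q' show ?thesis by simp
qed

lemma sign_congruence_eq:
  fixes p x y :: "'a::conjugatable_field"
  assumes norms: "\<And>p::'a. p * conjugate p \<noteq> -1"
    and p: "p \<noteq> 0" and x: "x \<in> {-1,0,1}" and y: "y \<in> {-1,0,1}" and xy: "y = p * x * conjugate p"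
  shows "x = y"
proof -
  have "p * conjugate p \<noteq> 0" "p * conjugate p \<noteq> -1" using p norms by auto
  moreover have "y = x * (p * conjugate p)" unfolding xy by (simp add: algebra_simps)
  ultimately show ?thesis using x y by (auto simp: minus_equation_iff[of "p * conjugate p"])
qed

lemma spi_plus_normal_form_diag_eq:
  fixes b c z w :: "'a::conjugatable_field mat"
  assumes norms: "\<And>p::'a. p * conjugate p \<noteq> -1"
    and z: "z \<in> hermitian_mats n" "spi_plus_block 0 n z" and w: "w \<in> carrier_mat n n" "spi_plus_block 0 n w"
    and b: "b \<in> borel_mats n" and c: "c \<in> borel_mats n" and cb: "c * b = 1\<^sub>m n"
    and eq: "w * mat_adjoint c = b * z" and i: "i < n"
    and off_diag: "\<And>k. k < n \<Longrightarrow> k \<noteq> i \<Longrightarrow> z $$ (i,k) = w $$ (i,k)"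
  shows "z $$ (i,i) = w $$ (i,i)"
proof (cases "\<exists>k<n. k \<noteq> i \<and> z $$ (i,k) \<noteq> 0")
  case True
  then obtain k where k: "k < n" "k \<noteq> i" "z $$ (i,k) \<noteq> 0" by blast
  then have "w $$ (i,k) \<noteq> 0" using off_diag[OF k(1,2)] by simp
  then have "z $$ (i,i) = 0" "w $$ (i,i) = 0"
    using spi_plus_block_row_unique[OF z(2), of i i k] spi_plus_block_row_unique[OF w(2), of i i k] i k
    by (metis atLeastLessThan_iff zero_le)+
  then show ?thesis by simp
next
  case False
  then have w_row: "w $$ (i,q) = 0" if "q < n" "q \<noteq> i" for q
    using off_diag[OF that] that by auto
  have z_col: "z $$ (p,i) = 0" if "p < n" "p \<noteq> i" for p
    using False hermitian_mats_entry[OF z(1) i that(1)] that by auto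
  have "b \<in> carrier_mat n n" "upper_triangular b" "c \<in> carrier_mat n n" "upper_triangular c"
    using b c unfolding borel_mats_def by blast+
  then have "w $$ (i,i) = b $$ (i,i) * z $$ (i,i) * conjugate (b $$ (i,i))"
    using congruence_isolated_diag[OF _ _ _ _ hermitian_mats_carrier[OF z(1)] w(1) cb eq i w_row z_col]
    by blast
  moreover have "z $$ (i,i) \<in> {-1,0,1}" "w $$ (i,i) \<in> {-1,0,1}"
    using spi_plus_block_entry[OF z(2), of i i] spi_plus_block_entry[OF w(2), of i i] i by auto
  ultimately show ?thesis
    using sign_congruence_eq[OF norms borel_mats_diag_nonzero[OF b i]] by blast
qed

lemma spi_plus_normal_form_unique:
  fixes z w :: "'a::conjugatable_field mat"
  assumes norms: "\<And>p::'a. p * conjugate p \<noteq> -1"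
    and z: "z \<in> hermitian_mats n" "spi_plus_block 0 n z" and w: "w \<in> hermitian_mats n" "spi_plus_block 0 n w"
    and orbit: "w \<in> borel_orbit n z"
  shows "z = w"
proof -
  have zc: "z \<in> carrier_mat n n" and wc: "w \<in> carrier_mat n n"
    using z(1) w(1) by (auto dest: hermitian_mats_carrier)
  obtain b c where b: "b \<in> borel_mats n" and c: "c \<in> borel_mats n" and cb: "c * b = 1\<^sub>m n"
    and eq_w: "w * mat_adjoint c = b * z" and eq_z: "z * mat_adjoint b = c * w"
    using borel_orbit_cancel[OF orbit zc] by blast
  have upper: "z $$ (i,k) = w $$ (i,k)" if "i < k" "k < n" for i k
  proof -
    have "z $$ (i,k) \<noteq> 0 \<longleftrightarrow> w $$ (i,k) \<noteq> 0"
      using spi_plus_block_support_eq[OF z w b c eq_w eq_z that]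
        spi_plus_block_support_eq[OF w z c b eq_z eq_w that] by blast
    moreover have "z $$ (i,k) \<in> {0,1}" "w $$ (i,k) \<in> {0,1}"
      using spi_plus_block_off_diag[OF z(2)] spi_plus_block_off_diag[OF w(2)] that by auto
    ultimately show ?thesis by auto
  qed
  have off_diag: "z $$ (i,k) = w $$ (i,k)" if "i < n" "k < n" "i \<noteq> k" for i k
  proof (cases "i < k")
    case False
    then have "k < i" using that(3) by simp
    then show ?thesis
      using upper[of k i] hermitian_mats_entry[OF z(1) that(2,1)] hermitian_mats_entry[OF w(1) that(2,1)] that
      by simp
  qed (use upper that in simp)
  have diag: "z $$ (i,i) = w $$ (i,i)" if "i < n" for i
    using spi_plus_normal_form_diag_eq[OF norms z wc w(2) b c cb eq_w that] off_diag[OF that] by blast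
  show ?thesis
  proof (rule eq_matI)
    fix i k assume "i < dim_row w" "k < dim_col w"
    then show "z $$ (i,k) = w $$ (i,k)" using wc off_diag diag by (cases "i = k") auto
  qed (use zc wc in auto)
qed

section \<open>Signed partial involutions and the orbit bijection\<close>

lemma SPI_plusD:
  assumes "\<tau> \<in> SPI_plus n"
  shows SPI_plus_carrier: "\<tau> \<in> carrier_mat n n"
    and SPI_plus_entry: "i < n \<Longrightarrow> j < n \<Longrightarrow> \<tau> $$ (i,j) \<in> {-1,0,1}"
    and SPI_plus_off_diag: "i < n \<Longrightarrow> j < n \<Longrightarrow> i \<noteq> j \<Longrightarrow> \<tau> $$ (i,j) \<in> {0,1}"
    and SPI_plus_row_unique:
      "i < n \<Longrightarrow> j < n \<Longrightarrow> k < n \<Longrightarrow> \<tau> $$ (i,j) \<noteq> 0 \<Longrightarrow> \<tau> $$ (i,k) \<noteq> 0 \<Longrightarrow> j = k"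
    and SPI_plus_symmetric: "i < n \<Longrightarrow> j < n \<Longrightarrow> \<tau> $$ (j,i) = \<tau> $$ (i,j)"
proof -
  have spp: "signed_partial_perm n \<tau>" and tr: "transpose_mat \<tau> = \<tau>"
    and pos: "\<And>i j. i < n \<Longrightarrow> j < n \<Longrightarrow> i \<noteq> j \<Longrightarrow> \<tau> $$ (i,j) \<ge> 0"
    using assms unfolding SPI_plus_def SPI_def by auto
  show c: "\<tau> \<in> carrier_mat n n" using spp by (simp add: signed_partial_perm_def)
  show e: "\<tau> $$ (i,j) \<in> {-1,0,1}" if "i < n" "j < n" for i j
    using spp that by (simp add: signed_partial_perm_def)
  show "\<tau> $$ (i,j) \<in> {0,1}" if "i < n" "j < n" "i \<noteq> j" for i j
    using e[of i j] pos[of i j] that by auto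
  show "j = k" if "i < n" "j < n" "k < n" "\<tau> $$ (i,j) \<noteq> 0" "\<tau> $$ (i,k) \<noteq> 0" for i j k
    using spp that by (simp add: signed_partial_perm_def)
  show "\<tau> $$ (j,i) = \<tau> $$ (i,j)" if "i < n" "j < n" for i j
    using arg_cong[OF tr, of "\<lambda>A. A $$ (i,j)"] c that by simp
qed

lemma SPI_plusI:
  assumes c: "\<tau> \<in> carrier_mat n n"
    and entry: "\<And>i j. i < n \<Longrightarrow> j < n \<Longrightarrow> \<tau> $$ (i,j) \<in> {-1,0,1}"
    and off_diag: "\<And>i j. i < n \<Longrightarrow> j < n \<Longrightarrow> i \<noteq> j \<Longrightarrow> \<tau> $$ (i,j) \<ge> 0"
    and row_unique:
      "\<And>i j k. i < n \<Longrightarrow> j < n \<Longrightarrow> k < n \<Longrightarrow> \<tau> $$ (i,j) \<noteq> 0 \<Longrightarrow> \<tau> $$ (i,k) \<noteq> 0 \<Longrightarrow> j = k"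
    and symmetric: "\<And>i j. i < n \<Longrightarrow> j < n \<Longrightarrow> \<tau> $$ (j,i) = \<tau> $$ (i,j)"
  shows "\<tau> \<in> SPI_plus n"
proof -
  have "signed_partial_perm n \<tau>"
    unfolding signed_partial_perm_def
  proof (intro conjI allI impI c)
    fix i j k assume "i < n" "j < n" "k < n" "\<tau> $$ (i,j) \<noteq> 0 \<and> \<tau> $$ (k,j) \<noteq> 0"
    then show "i = k" using row_unique[of j i k] symmetric[of i j] symmetric[of k j] by auto
  qed (use entry row_unique in blast)+
  moreover have "transpose_mat \<tau> = \<tau>"
    using c symmetric by (intro eq_matI) auto
  ultimately show ?thesis unfolding SPI_plus_def SPI_def using off_diag by blast
qed

lemma of_int_SPI_plus_normal_form:
  assumes \<tau>: "\<tau> \<in> SPI_plus n"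
  shows "(map_mat of_int \<tau> :: 'a::conjugatable_field mat) \<in> hermitian_mats n"
    and "spi_plus_block 0 n (map_mat of_int \<tau> :: 'a mat)"
proof -
  let ?w = "map_mat of_int \<tau> :: 'a mat"
  have c: "\<tau> \<in> carrier_mat n n" using \<tau> by (rule SPI_plus_carrier)
  show "?w \<in> hermitian_mats n"
    unfolding hermitian_mats_iff using c SPI_plus_symmetric[OF \<tau>] by simp
  have "?w $$ (j,k) \<in> {-1,0,1} \<and> (j \<noteq> k \<longrightarrow> ?w $$ (j,k) \<in> {0,1})" if "j < n" "k < n" for j k
    using c that SPI_plus_entry[OF \<tau> that] SPI_plus_off_diag[OF \<tau> that] by auto
  moreover have "k = l" if "j < n" "k < n" "l < n" "?w $$ (j,k) \<noteq> 0" "?w $$ (j,l) \<noteq> 0" for j k l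
    using c that SPI_plus_row_unique[OF \<tau>, of j k l] by (metis index_map_mat(1) carrier_matD of_int_0)
  ultimately show "spi_plus_block 0 n ?w" unfolding spi_plus_block_def by auto
qed

lemma of_int_sign_inj:
  assumes "(1::'a::ring_1) \<noteq> -1" "x \<in> {-1,0,1}" "y \<in> {-1,0,1}" "(of_int x :: 'a) = of_int y"
  shows "x = y"
proof -
  have "(-1::'a) \<noteq> 1" using assms(1) by (metis minus_minus)
  then show ?thesis using assms(2-4) by auto
qed

lemma inj_on_of_int_SPI_plus:
  assumes char: "(1::'a::ring_1) \<noteq> -1"
  shows "inj_on (\<lambda>\<tau>. map_mat of_int \<tau> :: 'a mat) (SPI_plus n)"
proof (rule inj_onI)
  fix \<tau> \<sigma> assume \<tau>: "\<tau> \<in> SPI_plus n" and \<sigma>: "\<sigma> \<in> SPI_plus n"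
    and eq: "(map_mat of_int \<tau> :: 'a mat) = map_mat of_int \<sigma>"
  have c: "\<tau> \<in> carrier_mat n n" "\<sigma> \<in> carrier_mat n n" using \<tau> \<sigma> by (auto dest: SPI_plus_carrier)
  show "\<tau> = \<sigma>"
  proof (rule eq_matI)
    fix i j assume "i < dim_row \<sigma>" "j < dim_col \<sigma>"
    then have ij: "i < n" "j < n" using c by auto
    have "(of_int (\<tau> $$ (i,j)) :: 'a) = of_int (\<sigma> $$ (i,j))"
      using arg_cong[OF eq, of "\<lambda>A. A $$ (i,j)"] c ij by simp
    then show "\<tau> $$ (i,j) = \<sigma> $$ (i,j)"
      using of_int_sign_inj[OF char SPI_plus_entry[OF \<tau> ij] SPI_plus_entry[OF \<sigma> ij]] by blast
  qed (use c in auto)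
qed

lemma spi_plus_normal_form_in_of_int_SPI_plus:
  fixes w :: "'a::conjugatable_field mat"
  assumes char: "(1::'a) \<noteq> -1" and w: "w \<in> hermitian_mats n" "spi_plus_block 0 n w"
  shows "w \<in> (\<lambda>\<tau>. map_mat of_int \<tau>) ` SPI_plus n"
proof -
  have wc: "w \<in> carrier_mat n n" using w(1) by (rule hermitian_mats_carrier)
  define \<tau> :: "int mat" where "\<tau> = map_mat (\<lambda>x. if x = 1 then 1 else if x = -1 then -1 else 0) w"
  have tc: "\<tau> \<in> carrier_mat n n" using wc unfolding \<tau>_def by simp
  have tau: "\<tau> $$ (i,j) = (if w $$ (i,j) = 1 then 1 else if w $$ (i,j) = -1 then -1 else 0)"
    if "i < n" "j < n" for i j
    using that wc unfolding \<tau>_def by simp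
  have entry: "of_int (\<tau> $$ (i,j)) = w $$ (i,j)" "\<tau> $$ (i,j) \<noteq> 0 \<longleftrightarrow> w $$ (i,j) \<noteq> 0"
    if "i < n" "j < n" for i j
    using tau[OF that] char spi_plus_block_entry[OF w(2), of i j] that by auto
  have w_sym: "w $$ (j,i) = w $$ (i,j)" if "i < n" "j < n" for i j
  proof -
    have "w $$ (i,j) \<in> {-1,0,1}" using spi_plus_block_entry[OF w(2)] that by simp
    then have "conjugate (w $$ (i,j)) = w $$ (i,j)" by (rule conjugate_sign)
    with hermitian_mats_entry[OF w(1) that] show ?thesis by simp
  qed
  have "\<tau> \<in> SPI_plus n"
  proof (rule SPI_plusI[OF tc])
    show "\<tau> $$ (i,j) \<in> {-1,0,1}" if "i < n" "j < n" for i j using tau[OF that] by simp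
    show "\<tau> $$ (i,j) \<ge> 0" if "i < n" "j < n" "i \<noteq> j" for i j
      using spi_plus_block_off_diag[OF w(2), of i j] tau[OF that(1,2)] that by auto
    show "j = k" if "i < n" "j < n" "k < n" "\<tau> $$ (i,j) \<noteq> 0" "\<tau> $$ (i,k) \<noteq> 0" for i j k
      using that entry(2) spi_plus_block_row_unique[OF w(2), of i j k] by auto
    show "\<tau> $$ (j,i) = \<tau> $$ (i,j)" if "i < n" "j < n" for i j
      using that by (simp add: tau w_sym)
  qed
  moreover have "map_mat of_int \<tau> = w" using wc tc entry(1) by (intro eq_matI) auto
  ultimately show ?thesis by blast
qed

lemma of_int_SPI_plus_bij:
  assumes char: "(1::'a::conjugatable_field) \<noteq> -1"
  shows "bij_betw (\<lambda>\<tau>. map_mat of_int \<tau> :: 'a mat) (SPI_plus n) {w \<in> hermitian_mats n. spi_plus_block 0 n w}"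
  unfolding bij_betw_def
  using inj_on_of_int_SPI_plus[OF char] of_int_SPI_plus_normal_form
    spi_plus_normal_form_in_of_int_SPI_plus[OF char] by blast

lemma borel_orbit_spi_plus_normal_form_bij:
  fixes n :: nat
  assumes unit_scaling:
      "\<And>a::'a::conjugatable_field. conjugate a = a \<Longrightarrow> a \<noteq> 0 \<Longrightarrow> \<exists>p. p * a * conjugate p \<in> {1,-1}"
    and norms: "\<And>p::'a. p * conjugate p \<noteq> -1" and two: "(2::'a) \<noteq> 0"
  shows "bij_betw (borel_orbit n) {w \<in> hermitian_mats n. spi_plus_block 0 n w}
    (borel_orbit n ` (hermitian_mats n :: 'a mat set))"
  unfolding bij_betw_def
proof
  let ?H = "hermitian_mats n :: 'a mat set"
  let ?N = "{w \<in> ?H. spi_plus_block 0 n w}"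
  show "inj_on (borel_orbit n) ?N"
  proof (rule inj_onI)
    fix z w assume z: "z \<in> ?N" and w: "w \<in> ?N" and eq: "borel_orbit n z = borel_orbit n w"
    have "w \<in> borel_orbit n z"
      using eq borel_orbit_refl[OF hermitian_mats_carrier] w by blast
    then show "z = w" using spi_plus_normal_form_unique[OF norms] z w by blast
  qed
  show "borel_orbit n ` ?N = borel_orbit n ` ?H"
  proof
    show "borel_orbit n ` ?H \<subseteq> borel_orbit n ` ?N"
    proof
      fix X assume "X \<in> borel_orbit n ` ?H"
      then obtain z where z: "z \<in> ?H" "X = borel_orbit n z" by blast
      obtain w where w: "w \<in> borel_orbit n z" "spi_plus_block 0 n w"
        using spi_plus_normal_form_exists[OF unit_scaling two z(1)] by blast
      have "X = borel_orbit n w" using borel_orbit_eq[OF w(1) hermitian_mats_carrier[OF z(1)]] z(2) by simp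
      moreover have "w \<in> ?N" using borel_orbit_hermitian[OF z(1) w(1)] w(2) by blast
      ultimately show "X \<in> borel_orbit n ` ?N" by blast
    qed
  qed blast
qed

theorem SPI_plus_borel_orbit_bij:
  assumes unit_scaling:
      "\<And>a::'a::conjugatable_field. conjugate a = a \<Longrightarrow> a \<noteq> 0 \<Longrightarrow> \<exists>p. p * a * conjugate p \<in> {1,-1}"
    and norms: "\<And>p::'a. p * conjugate p \<noteq> -1"
  shows "bij_betw (\<lambda>\<tau>. borel_orbit n (map_mat of_int \<tau> :: 'a mat)) (SPI_plus n) (borel_orbit n ` hermitian_mats n)"
proof -
  have char: "(1::'a) \<noteq> -1" using norms[of 1] by simp
  then have "(2::'a) \<noteq> 0" by (metis add_eq_0_iff one_add_one)
  note orbit_bij = borel_orbit_spi_plus_normal_form_bij[OF unit_scaling norms this]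
  from bij_betw_trans[OF of_int_SPI_plus_bij[OF char] orbit_bij] show ?thesis
    by (simp add: comp_def)
qed

lemma real_unit_scaling: "(a::real) \<noteq> 0 \<Longrightarrow> \<exists>p. p * a * p \<in> {1,-1}"
proof (intro exI)
  assume "a \<noteq> 0"
  have "(1 / sqrt \<bar>a\<bar>) * a * (1 / sqrt \<bar>a\<bar>) = a / \<bar>a\<bar>"
    by (simp add: field_simps)
  then show "(1 / sqrt \<bar>a\<bar>) * a * (1 / sqrt \<bar>a\<bar>) \<in> {1,-1}"
    using \<open>a \<noteq> 0\<close> by (cases "a > 0") auto
qed

lemma real_square_not_minus_one: "p * p \<noteq> (-1::real)"
  by (smt (verit) zero_le_square)

lemma complex_unit_scaling:
  assumes "cnj a = a" "a \<noteq> 0"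
  shows "\<exists>p. p * a * cnj p \<in> {1,-1}"
proof -
  have a: "a = of_real (Re a)" using assms(1) by (simp add: complex_eq_iff)
  then have "Re a \<noteq> 0" using assms(2) by (metis of_real_0)
  then obtain p where "p * Re a * p \<in> {1,-1}" using real_unit_scaling by blast
  then have "of_real p * a * cnj (of_real p) \<in> {1,-1}"
    by (subst a) (auto simp flip: of_real_mult)
  then show ?thesis by blast
qed

lemma complex_norm_not_minus_one: "p * cnj p \<noteq> -1"
proof
  assume "p * cnj p = -1"
  then have "complex_of_real ((Re p)\<^sup>2 + (Im p)\<^sup>2) = complex_of_real (-1)"
    by (simp add: complex_mult_cnj)
  then have "(Re p)\<^sup>2 + (Im p)\<^sup>2 = -1" by (rule of_real_eq_iff[THEN iffD1])
  then show False by (smt (verit) zero_le_power2)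
qed

theorem proposition3p14:
  fixes m :: nat
  shows "bij_betw (\<lambda>\<tau>. herm_orbit m (map_mat of_int \<tau>)) (SPI_plus m) (herm_orbit_space m)
       \<and> bij_betw (\<lambda>\<tau>. sym_orbit m (map_mat of_int \<tau>)) (SPI_plus m) (sym_orbit_space m)"
proof -
  have "herm_orbit m = borel_orbit m" "herm_mats m = hermitian_mats m"
    unfolding herm_orbit_def borel_orbit_def herm_mats_def hermitian_mats_def by auto
  moreover have "sym_orbit m = borel_orbit m" "sym_mats m = hermitian_mats m"
    unfolding sym_orbit_def borel_orbit_def sym_mats_def hermitian_mats_def mat_adjoint_real by auto
  moreover have "bij_betw (\<lambda>\<tau>. borel_orbit m (map_mat of_int \<tau> :: complex mat)) (SPI_plus m)
      (borel_orbit m ` hermitian_mats m)"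
    by (rule SPI_plus_borel_orbit_bij) (use complex_unit_scaling complex_norm_not_minus_one in auto)
  moreover have "bij_betw (\<lambda>\<tau>. borel_orbit m (map_mat of_int \<tau> :: real mat)) (SPI_plus m)
      (borel_orbit m ` hermitian_mats m)"
    by (rule SPI_plus_borel_orbit_bij) (use real_unit_scaling real_square_not_minus_one in auto)
  ultimately show ?thesis unfolding herm_orbit_space_def sym_orbit_space_def by simp
qed

end
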